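(* Let $V,W$ be concrete affine algebraic equivarieties over $k$. There is only one sheaf $\mathcal O$ of $k$-valued functions on $V\times W$ (with its Zariski topology) such that $(V\times W,\mathcal O)$ is a concrete affine algebraic equivariety which, together with the set-theoretic projections to $V$ and $W$, is a product of $V$ and $W$ in the category of affine algebraic equivarieties.
   Context: $k$ is an arbitrary commutative field. An affine algebraic equivariety over $k$ is a locally ringed space in $k$-algebras isomorphic to $(V,\mathcal O_V)$ for $V\subseteq k^n$ the common zero set of polynomials, with the Zariski topology and $\mathcal O_V(U)$ the functions $U\to k$ locally of the form $G/H$ ($G,H$ polynomials, $H$ nowhere zero locally); morphisms are morphisms of locally ringed spaces in $k$-algebras. $J(V)=\Gamma(V,\mathcal O_V)$. An equivariety is concrete if each $\mathcal O_V(U)$ is a $k$-subalgebra of the algebra of all functions $U\to k$ with restriction of functions as restriction maps; for concrete ones, morphisms $f$ are exactly the continuous maps with $s\circ f\in\mathcal O_V(f^{-1}U)$ for all open $U$ and sections $s$ over $U$. The Zariski topology on $V\times W$ has as closed sets the common zero sets of sets of functions $(P,Q)\mapsto\sum_i g_i(P)h_i(Q)$ (finite sums, $g_i\in J(V)$, $h_i\in J(W)$). *)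

theory Defs
  imports "HOL-Analysis.Analysis" "HOL-Library.FuncSet"
begin

inductive_set eqv_polyfun :: "nat \<Rightarrow> ('k::field list \<Rightarrow> 'k) set" for n :: nat where
  const: "(\<lambda>x. c) \<in> eqv_polyfun n"
| var: "i < n \<Longrightarrow> (\<lambda>x. x ! i) \<in> eqv_polyfun n"
| add: "p \<in> eqv_polyfun n \<Longrightarrow> q \<in> eqv_polyfun n \<Longrightarrow> (\<lambda>x. p x + q x) \<in> eqv_polyfun n"
| mult: "p \<in> eqv_polyfun n \<Longrightarrow> q \<in> eqv_polyfun n \<Longrightarrow> (\<lambda>x. p x * q x) \<in> eqv_polyfun n"

definition eqv_kn :: "nat \<Rightarrow> 'k::field list set" where
  "eqv_kn n = {x. length x = n}"

definition eqv_zero_set :: "nat \<Rightarrow> ('k::field list \<Rightarrow> 'k) set \<Rightarrow> 'k list set" where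
  "eqv_zero_set n S = {x \<in> eqv_kn n. \<forall>p\<in>S. p x = 0}"

definition eqv_algebraic_set :: "nat \<Rightarrow> 'k::field list set \<Rightarrow> bool" where
  "eqv_algebraic_set n V \<longleftrightarrow> (\<exists>S \<subseteq> eqv_polyfun n. V = eqv_zero_set n S)"

definition eqv_zariski :: "nat \<Rightarrow> 'k::field list set \<Rightarrow> 'k list topology" where
  "eqv_zariski n V = topology (\<lambda>U. \<exists>S \<subseteq> eqv_polyfun n. U = V - eqv_zero_set n S)"

text \<open>Sections are represented as extensional functions (value undefined off U).\<close>
definition eqv_std_sheaf :: "nat \<Rightarrow> 'k::field list set \<Rightarrow> 'k list set \<Rightarrow> ('k list \<Rightarrow> 'k) set" where
  "eqv_std_sheaf n V U =
     (if openin (eqv_zariski n V) U then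
        {f \<in> extensional U. \<forall>x\<in>U. \<exists>U'. openin (eqv_zariski n V) U' \<and> x \<in> U' \<and> U' \<subseteq> U \<and>
            (\<exists>G\<in>eqv_polyfun n. \<exists>H\<in>eqv_polyfun n. \<forall>y\<in>U'. H y \<noteq> 0 \<and> f y = G y / H y)}
      else {})"

definition eqv_cmorph ::
  "'a topology \<Rightarrow> ('a set \<Rightarrow> ('a \<Rightarrow> 'k) set) \<Rightarrow> 'b topology \<Rightarrow> ('b set \<Rightarrow> ('b \<Rightarrow> 'k) set) \<Rightarrow> ('a \<Rightarrow> 'b) \<Rightarrow> bool" where
  "eqv_cmorph T1 O1 T2 O2 f \<longleftrightarrow> continuous_map T1 T2 f \<and>
     (\<forall>U s. openin T2 U \<longrightarrow> s \<in> O2 U \<longrightarrow>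
        restrict (s \<circ> f) (topspace T1 \<inter> f -` U) \<in> O1 (topspace T1 \<inter> f -` U))"

definition eqv_affine ::
  "'a topology \<Rightarrow> ('a set \<Rightarrow> ('a \<Rightarrow> 'k::field) set) \<Rightarrow> bool" where
  "eqv_affine T Sh \<longleftrightarrow> (\<forall>U. Sh U \<subseteq> extensional U) \<and> (\<forall>U. \<not> openin T U \<longrightarrow> Sh U = {}) \<and>
     (\<exists>n V f g. eqv_algebraic_set n V \<and>
        eqv_cmorph T Sh (eqv_zariski n V) (eqv_std_sheaf n V) f \<and>
        eqv_cmorph (eqv_zariski n V) (eqv_std_sheaf n V) T Sh g \<and>
        (\<forall>x\<in>topspace T. g (f x) = x) \<and> (\<forall>y\<in>topspace (eqv_zariski n V). f (g y) = y))"

definition eqv_sumprods ::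
  "'v topology \<Rightarrow> ('v set \<Rightarrow> ('v \<Rightarrow> 'k::field) set) \<Rightarrow> 'w topology \<Rightarrow> ('w set \<Rightarrow> ('w \<Rightarrow> 'k) set)
   \<Rightarrow> ('v \<times> 'w \<Rightarrow> 'k) set" where
  "eqv_sumprods TV OV TW OW =
     {F. \<exists>(m::nat) g h. (\<forall>i<m. g i \<in> OV (topspace TV) \<and> h i \<in> OW (topspace TW)) \<and>
                 F = (\<lambda>(P, Q). \<Sum>i<m. g i P * h i Q)}"

definition eqv_prod_zariski ::
  "'v topology \<Rightarrow> ('v set \<Rightarrow> ('v \<Rightarrow> 'k::field) set) \<Rightarrow> 'w topology \<Rightarrow> ('w set \<Rightarrow> ('w \<Rightarrow> 'k) set)
   \<Rightarrow> ('v \<times> 'w) topology" where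
  "eqv_prod_zariski TV OV TW OW = topology (\<lambda>U. \<exists>S \<subseteq> eqv_sumprods TV OV TW OW.
      U = (topspace TV \<times> topspace TW) - {p \<in> topspace TV \<times> topspace TW. \<forall>F\<in>S. F p = 0})"

text \<open>Test objects range over all concrete affine equivarieties with carrier in 'k list;
  every affine algebraic equivariety is isomorphic to one of these.\<close>
definition eqv_is_product ::
  "('v \<times> 'w) topology \<Rightarrow> (('v \<times> 'w) set \<Rightarrow> ('v \<times> 'w \<Rightarrow> 'k::field) set)
   \<Rightarrow> 'v topology \<Rightarrow> ('v set \<Rightarrow> ('v \<Rightarrow> 'k) set) \<Rightarrow> 'w topology \<Rightarrow> ('w set \<Rightarrow> ('w \<Rightarrow> 'k) set) \<Rightarrow> bool" where
  "eqv_is_product TP OP TV OV TW OW \<longleftrightarrow>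
     eqv_cmorph TP OP TV OV fst \<and> eqv_cmorph TP OP TW OW snd \<and>
     (\<forall>(TZ :: 'k list topology) OZ g h.
        eqv_affine TZ OZ \<and> eqv_cmorph TZ OZ TV OV g \<and> eqv_cmorph TZ OZ TW OW h \<longrightarrow>
        (\<exists>u. eqv_cmorph TZ OZ TP OP u \<and> (\<forall>z\<in>topspace TZ. fst (u z) = g z \<and> snd (u z) = h z) \<and>
             (\<forall>u'. eqv_cmorph TZ OZ TP OP u' \<and> (\<forall>z\<in>topspace TZ. fst (u' z) = g z \<and> snd (u' z) = h z)
                   \<longrightarrow> (\<forall>z\<in>topspace TZ. u' z = u z))))"

end

theory Submission
  imports Defs
begin

text \<open>Let \<open>g\<close> be a chart of \<open>(V \<times> W, O\<^sub>2)\<close>, i.e. an isomorphism from a standard affine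
  space onto it. Its components \<open>fst \<circ> g\<close> and \<open>snd \<circ> g\<close> are morphisms, so the universal
  property of \<open>(V \<times> W, O\<^sub>1)\<close> yields a morphism into \<open>(V \<times> W, O\<^sub>1)\<close> with these components,
  which can only be \<open>g\<close> itself. Composing with the inverse chart, the identity is a morphism
  from \<open>(V \<times> W, O\<^sub>2)\<close> to \<open>(V \<times> W, O\<^sub>1)\<close>; for concrete sheaves this says that every
  \<open>O\<^sub>1\<close>-section is an \<open>O\<^sub>2\<close>-section. By symmetry \<open>O\<^sub>1 = O\<^sub>2\<close>.\<close>

lemma eqv_cmorph_comp:
  assumes f: "eqv_cmorph T1 O1 T2 O2 f" and g: "eqv_cmorph T2 O2 T3 O3 g"
  shows "eqv_cmorph T1 O1 T3 O3 (g \<circ> f)"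
proof -
  have cf: "continuous_map T1 T2 f" and cg: "continuous_map T2 T3 g"
    using f g unfolding eqv_cmorph_def by auto
  have "restrict (s \<circ> (g \<circ> f)) (topspace T1 \<inter> (g \<circ> f) -` U) \<in> O1 (topspace T1 \<inter> (g \<circ> f) -` U)"
    if U: "openin T3 U" and s: "s \<in> O3 U" for U s
  proof -
    define W where "W = topspace T2 \<inter> g -` U"
    have W: "openin T2 W"
      using cg U unfolding continuous_map_def W_def by (simp add: Int_def)
    have "restrict (s \<circ> g) W \<in> O2 W"
      using g U s unfolding eqv_cmorph_def W_def by auto
    then have sf: "restrict (restrict (s \<circ> g) W \<circ> f) (topspace T1 \<inter> f -` W) \<in> O1 (topspace T1 \<inter> f -` W)"
      using f W unfolding eqv_cmorph_def by auto
    have preimage: "topspace T1 \<inter> f -` W = topspace T1 \<inter> (g \<circ> f) -` U"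
      using cf unfolding W_def continuous_map_def by auto
    have "restrict (restrict (s \<circ> g) W \<circ> f) (topspace T1 \<inter> f -` W)
        = restrict (s \<circ> (g \<circ> f)) (topspace T1 \<inter> (g \<circ> f) -` U)"
      unfolding preimage using continuous_map_image_subset_topspace[OF cf]
      by (intro ext) (auto simp: restrict_def W_def)
    then show ?thesis using sf preimage by simp
  qed
  with cf cg show ?thesis
    unfolding eqv_cmorph_def by (auto intro: continuous_map_compose)
qed

lemma eqv_cmorph_cong:
  assumes f: "eqv_cmorph T1 O1 T2 O2 f" and eq: "\<forall>x\<in>topspace T1. f x = f' x"
  shows "eqv_cmorph T1 O1 T2 O2 f'"
proof -
  have "continuous_map T1 T2 f'"
    using f eq continuous_map_eq unfolding eqv_cmorph_def by metis
  moreover have "restrict (s \<circ> f') (topspace T1 \<inter> f' -` U) \<in> O1 (topspace T1 \<inter> f' -` U)"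
    if "openin T2 U" and "s \<in> O2 U" for U s
  proof -
    have preimage: "topspace T1 \<inter> f' -` U = topspace T1 \<inter> f -` U" using eq by auto
    have "restrict (s \<circ> f') (topspace T1 \<inter> f' -` U) = restrict (s \<circ> f) (topspace T1 \<inter> f -` U)"
      unfolding preimage by (intro ext) (auto simp: restrict_def eq)
    then show ?thesis using f that preimage unfolding eqv_cmorph_def by auto
  qed
  ultimately show ?thesis unfolding eqv_cmorph_def by auto
qed

lemma eqv_cmorph_id:
  assumes "\<forall>U. Sh U \<subseteq> extensional U"
  shows "eqv_cmorph T Sh T Sh id"
  unfolding eqv_cmorph_def
proof (intro conjI allI impI)
  fix U s assume U: "openin T U" and s: "s \<in> Sh U"
  have "topspace T \<inter> id -` U = U" using openin_subset[OF U] by auto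
  moreover have "restrict (s \<circ> id) U = s"
    using s assms by (simp add: extensional_restrict subset_iff)
  ultimately show "restrict (s \<circ> id) (topspace T \<inter> id -` U) \<in> Sh (topspace T \<inter> id -` U)"
    using s by simp
qed simp

lemma eqv_affine_std:
  assumes "eqv_algebraic_set n V"
  shows "eqv_affine (eqv_zariski n V) (eqv_std_sheaf n V)"
proof -
  have "\<forall>U. eqv_std_sheaf n V U \<subseteq> extensional U" by (auto simp: eqv_std_sheaf_def)
  then have "eqv_cmorph (eqv_zariski n V) (eqv_std_sheaf n V) (eqv_zariski n V) (eqv_std_sheaf n V) id"
    by (rule eqv_cmorph_id)
  with \<open>\<forall>U. eqv_std_sheaf n V U \<subseteq> extensional U\<close> assms show ?thesis
    unfolding eqv_affine_def by (fastforce simp: eqv_std_sheaf_def)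
qed

lemma eqv_sections_subset_of_cmorph_id:
  assumes "eqv_cmorph T OP T OP' id"
    and "\<forall>U. OP' U \<subseteq> extensional U" and "\<forall>U. \<not> openin T U \<longrightarrow> OP' U = {}"
  shows "OP' U \<subseteq> OP U"
proof
  fix s assume s: "s \<in> OP' U"
  then have U: "openin T U" using assms(3) by auto
  then have "topspace T \<inter> id -` U = U" using openin_subset by auto
  moreover have "restrict (s \<circ> id) U = s"
    using s assms(2) by (simp add: extensional_restrict subset_iff)
  moreover have "restrict (s \<circ> id) (topspace T \<inter> id -` U) \<in> OP (topspace T \<inter> id -` U)"
    using assms(1) U s unfolding eqv_cmorph_def by blast
  ultimately show "s \<in> OP U" by simp
qed

lemma eqv_cmorph_into_product:
  fixes TZ :: "'k::field list topology" and OZ :: "'k list set \<Rightarrow> ('k list \<Rightarrow> 'k) set"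
  assumes "eqv_is_product TP OP TV OV TW OW" and "eqv_affine TZ OZ"
    and "eqv_cmorph TZ OZ TV OV (fst \<circ> h)" and "eqv_cmorph TZ OZ TW OW (snd \<circ> h)"
  shows "eqv_cmorph TZ OZ TP OP h"
proof -
  obtain u where u: "eqv_cmorph TZ OZ TP OP u"
    and components: "\<forall>z\<in>topspace TZ. fst (u z) = (fst \<circ> h) z \<and> snd (u z) = (snd \<circ> h) z"
    using assms unfolding eqv_is_product_def by blast
  from components have "\<forall>z\<in>topspace TZ. u z = h z" by (simp add: prod_eq_iff)
  with u show ?thesis by (rule eqv_cmorph_cong)
qed

lemma eqv_cmorph_id_into_product:
  assumes "eqv_affine TP OP'"
    and "eqv_cmorph TP OP' TV OV fst" and "eqv_cmorph TP OP' TW OW snd"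
    and "eqv_is_product TP OP TV OV TW OW"
  shows "eqv_cmorph TP OP' TP OP id"
proof -
  obtain n V f g where V: "eqv_algebraic_set n V"
    and f: "eqv_cmorph TP OP' (eqv_zariski n V) (eqv_std_sheaf n V) f"
    and g: "eqv_cmorph (eqv_zariski n V) (eqv_std_sheaf n V) TP OP' g"
    and gf: "\<forall>x\<in>topspace TP. g (f x) = x"
    using assms(1) unfolding eqv_affine_def by blast
  have "eqv_cmorph (eqv_zariski n V) (eqv_std_sheaf n V) TP OP g"
    using assms(4) eqv_affine_std[OF V]
      eqv_cmorph_comp[OF g assms(2)] eqv_cmorph_comp[OF g assms(3)]
    by (rule eqv_cmorph_into_product)
  with f have "eqv_cmorph TP OP' TP OP (g \<circ> f)" by (rule eqv_cmorph_comp)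
  then show ?thesis by (rule eqv_cmorph_cong) (simp add: gf)
qed

lemma eqv_product_sections_subset:
  assumes "eqv_affine TP O1" and "eqv_is_product TP O1 TV OV TW OW"
    and "eqv_affine TP O2" and "eqv_is_product TP O2 TV OV TW OW"
  shows "O1 U \<subseteq> O2 U"
proof (rule eqv_sections_subset_of_cmorph_id)
  have "eqv_cmorph TP O2 TV OV fst" and "eqv_cmorph TP O2 TW OW snd"
    using assms(4) unfolding eqv_is_product_def by auto
  with assms(3) show "eqv_cmorph TP O2 TP O1 id"
    using assms(2) by (rule eqv_cmorph_id_into_product)
  show "\<forall>U. O1 U \<subseteq> extensional U" and "\<forall>U. \<not> openin TP U \<longrightarrow> O1 U = {}"
    using assms(1) unfolding eqv_affine_def by auto
qed

theorem lemma2p10: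
  fixes TV :: "'v topology" and OV :: "'v set \<Rightarrow> ('v \<Rightarrow> 'k::field) set"
    and TW :: "'w topology" and OW :: "'w set \<Rightarrow> ('w \<Rightarrow> 'k) set"
    and O1 O2 :: "('v \<times> 'w) set \<Rightarrow> ('v \<times> 'w \<Rightarrow> 'k) set"
  assumes "eqv_affine TV OV" and "eqv_affine TW OW"
    and "eqv_affine (eqv_prod_zariski TV OV TW OW) O1"
    and "eqv_is_product (eqv_prod_zariski TV OV TW OW) O1 TV OV TW OW"
    and "eqv_affine (eqv_prod_zariski TV OV TW OW) O2"
    and "eqv_is_product (eqv_prod_zariski TV OV TW OW) O2 TV OV TW OW"
  shows "O1 = O2"
proof (rule ext, rule equalityI)
  fix U
  show "O1 U \<subseteq> O2 U" using assms(3-6) by (rule eqv_product_sections_subset)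
  show "O2 U \<subseteq> O1 U" using assms(5,6,3,4) by (rule eqv_product_sections_subset)
qed

end
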